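(* Let $C$ be a globularily generated double category and $\Phi$ a 2-morphism of $C$. If $\Phi$ is not globular, then $\Phi$ is a horizontal endomorphism, i.e. $s\Phi=t\Phi$.
   Context: Double categories are not assumed strict: $C_0$ (objects and vertical morphisms), $C_1$ (horizontal morphisms and 2-morphisms, with vertical composition), source and target functors $s,t:C_1\to C_0$, horizontal identity $i:C_0\to C_1$, horizontal composition $\ast$, and unitor and associator natural isomorphisms whose components are globular. A 2-morphism $\Phi$ is globular if $s\Phi$ and $t\Phi$ are identity vertical morphisms. $C$ is globularily generated if the smallest sub-double category of $C$ (subcategories of $C_0$, $C_1$ closed under $s,t,i,\ast$ and the constraints) containing all objects, vertical morphisms, horizontal morphisms and globular 2-morphisms of $C$ is $C$ itself. *)

theory Defs
  imports Main
begin

text \<open>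
  A (pseudo/weak) double category, presented by its data:
  \<^item> the category C0: objects Ob, vertical morphisms Vm with vdom, vcod, vid, vcomp
    (vcomp g f is "g after f", defined when vcod f = vdom g);
  \<^item> the category C1: objects Hm (horizontal morphisms), morphisms Sq (2-morphisms)
    with sdom, scod, sid, scomp (vertical composition of 2-morphisms);
  \<^item> source and target functors s,t : C1 \<rightarrow> C0 (object parts hsrc, htgt; morphism parts src, tgt);
  \<^item> horizontal identity functor i : C0 \<rightarrow> C1 (object part hunit, morphism part hunitv);
  \<^item> horizontal composition functor (object part hcompH, morphism part hcompS);
    hcompH M N is defined when hsrc M = htgt N, hcompS Phi Psi when src Phi = tgt Psi;
  \<^item> left/right unitors and associator (natural isomorphisms with globular components,
    satisfying pentagon and triangle).
\<close>

record ('o, 'v, 'h, 'c) dbl =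
  Ob :: "'o set"
  Vm :: "'v set"
  vdom :: "'v \<Rightarrow> 'o"
  vcod :: "'v \<Rightarrow> 'o"
  vid :: "'o \<Rightarrow> 'v"
  vcomp :: "'v \<Rightarrow> 'v \<Rightarrow> 'v"
  Hm :: "'h set"
  Sq :: "'c set"
  sdom :: "'c \<Rightarrow> 'h"
  scod :: "'c \<Rightarrow> 'h"
  sid :: "'h \<Rightarrow> 'c"
  scomp :: "'c \<Rightarrow> 'c \<Rightarrow> 'c"
  hsrc :: "'h \<Rightarrow> 'o"
  htgt :: "'h \<Rightarrow> 'o"
  src :: "'c \<Rightarrow> 'v"
  tgt :: "'c \<Rightarrow> 'v"
  hunit :: "'o \<Rightarrow> 'h"
  hunitv :: "'v \<Rightarrow> 'c"
  hcompH :: "'h \<Rightarrow> 'h \<Rightarrow> 'h"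
  hcompS :: "'c \<Rightarrow> 'c \<Rightarrow> 'c"
  lunit :: "'h \<Rightarrow> 'c"
  runit :: "'h \<Rightarrow> 'c"
  assoc :: "'h \<Rightarrow> 'h \<Rightarrow> 'h \<Rightarrow> 'c"

definition globular :: "('o, 'v, 'h, 'c, 'z) dbl_scheme \<Rightarrow> 'c \<Rightarrow> bool" where
  "globular D \<Phi> \<longleftrightarrow> (\<exists>a\<in>Ob D. src D \<Phi> = vid D a) \<and> (\<exists>b\<in>Ob D. tgt D \<Phi> = vid D b)"

definition sq_inverse :: "('o, 'v, 'h, 'c, 'z) dbl_scheme \<Rightarrow> 'c \<Rightarrow> 'c \<Rightarrow> bool" where
  "sq_inverse D \<Psi> \<Phi> \<longleftrightarrow> \<Psi> \<in> Sq D \<and> \<Phi> \<in> Sq D \<and> sdom D \<Psi> = scod D \<Phi> \<and> scod D \<Psi> = sdom D \<Phi>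
     \<and> scomp D \<Psi> \<Phi> = sid D (sdom D \<Phi>) \<and> scomp D \<Phi> \<Psi> = sid D (scod D \<Phi>)"

definition sq_iso :: "('o, 'v, 'h, 'c, 'z) dbl_scheme \<Rightarrow> 'c \<Rightarrow> bool" where
  "sq_iso D \<Phi> \<longleftrightarrow> \<Phi> \<in> Sq D \<and> (\<exists>\<Psi>. sq_inverse D \<Psi> \<Phi>)"

locale double_category =
  fixes D :: "('o, 'v, 'h, 'c, 'z) dbl_scheme"
  assumes
    vdom_in: "f \<in> Vm D \<Longrightarrow> vdom D f \<in> Ob D"
  and vcod_in: "f \<in> Vm D \<Longrightarrow> vcod D f \<in> Ob D"
  and vid_in: "a \<in> Ob D \<Longrightarrow> vid D a \<in> Vm D"
  and vid_dom: "a \<in> Ob D \<Longrightarrow> vdom D (vid D a) = a"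
  and vid_cod: "a \<in> Ob D \<Longrightarrow> vcod D (vid D a) = a"
  and vcomp_in: "\<lbrakk>f \<in> Vm D; g \<in> Vm D; vcod D f = vdom D g\<rbrakk> \<Longrightarrow> vcomp D g f \<in> Vm D"
  and vcomp_dom: "\<lbrakk>f \<in> Vm D; g \<in> Vm D; vcod D f = vdom D g\<rbrakk> \<Longrightarrow> vdom D (vcomp D g f) = vdom D f"
  and vcomp_cod: "\<lbrakk>f \<in> Vm D; g \<in> Vm D; vcod D f = vdom D g\<rbrakk> \<Longrightarrow> vcod D (vcomp D g f) = vcod D g"
  and vcomp_idl: "f \<in> Vm D \<Longrightarrow> vcomp D (vid D (vcod D f)) f = f"
  and vcomp_idr: "f \<in> Vm D \<Longrightarrow> vcomp D f (vid D (vdom D f)) = f"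
  and vcomp_assoc: "\<lbrakk>f \<in> Vm D; g \<in> Vm D; h \<in> Vm D; vcod D f = vdom D g; vcod D g = vdom D h\<rbrakk>
      \<Longrightarrow> vcomp D h (vcomp D g f) = vcomp D (vcomp D h g) f"
  and sdom_in: "\<Phi> \<in> Sq D \<Longrightarrow> sdom D \<Phi> \<in> Hm D"
  and scod_in: "\<Phi> \<in> Sq D \<Longrightarrow> scod D \<Phi> \<in> Hm D"
  and sid_in: "M \<in> Hm D \<Longrightarrow> sid D M \<in> Sq D"
  and sid_dom: "M \<in> Hm D \<Longrightarrow> sdom D (sid D M) = M"
  and sid_cod: "M \<in> Hm D \<Longrightarrow> scod D (sid D M) = M"
  and scomp_in: "\<lbrakk>\<Phi> \<in> Sq D; \<Psi> \<in> Sq D; scod D \<Phi> = sdom D \<Psi>\<rbrakk> \<Longrightarrow> scomp D \<Psi> \<Phi> \<in> Sq D"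
  and scomp_dom: "\<lbrakk>\<Phi> \<in> Sq D; \<Psi> \<in> Sq D; scod D \<Phi> = sdom D \<Psi>\<rbrakk> \<Longrightarrow> sdom D (scomp D \<Psi> \<Phi>) = sdom D \<Phi>"
  and scomp_cod: "\<lbrakk>\<Phi> \<in> Sq D; \<Psi> \<in> Sq D; scod D \<Phi> = sdom D \<Psi>\<rbrakk> \<Longrightarrow> scod D (scomp D \<Psi> \<Phi>) = scod D \<Psi>"
  and scomp_idl: "\<Phi> \<in> Sq D \<Longrightarrow> scomp D (sid D (scod D \<Phi>)) \<Phi> = \<Phi>"
  and scomp_idr: "\<Phi> \<in> Sq D \<Longrightarrow> scomp D \<Phi> (sid D (sdom D \<Phi>)) = \<Phi>"
  and scomp_assoc: "\<lbrakk>\<Phi> \<in> Sq D; \<Psi> \<in> Sq D; \<Xi> \<in> Sq D; scod D \<Phi> = sdom D \<Psi>; scod D \<Psi> = sdom D \<Xi>\<rbrakk>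
      \<Longrightarrow> scomp D \<Xi> (scomp D \<Psi> \<Phi>) = scomp D (scomp D \<Xi> \<Psi>) \<Phi>"
  and hsrc_in: "M \<in> Hm D \<Longrightarrow> hsrc D M \<in> Ob D"
  and src_in: "\<Phi> \<in> Sq D \<Longrightarrow> src D \<Phi> \<in> Vm D"
  and src_dom: "\<Phi> \<in> Sq D \<Longrightarrow> vdom D (src D \<Phi>) = hsrc D (sdom D \<Phi>)"
  and src_cod: "\<Phi> \<in> Sq D \<Longrightarrow> vcod D (src D \<Phi>) = hsrc D (scod D \<Phi>)"
  and src_sid: "M \<in> Hm D \<Longrightarrow> src D (sid D M) = vid D (hsrc D M)"
  and src_scomp: "\<lbrakk>\<Phi> \<in> Sq D; \<Psi> \<in> Sq D; scod D \<Phi> = sdom D \<Psi>\<rbrakk>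
      \<Longrightarrow> src D (scomp D \<Psi> \<Phi>) = vcomp D (src D \<Psi>) (src D \<Phi>)"
  and htgt_in: "M \<in> Hm D \<Longrightarrow> htgt D M \<in> Ob D"
  and tgt_in: "\<Phi> \<in> Sq D \<Longrightarrow> tgt D \<Phi> \<in> Vm D"
  and tgt_dom: "\<Phi> \<in> Sq D \<Longrightarrow> vdom D (tgt D \<Phi>) = htgt D (sdom D \<Phi>)"
  and tgt_cod: "\<Phi> \<in> Sq D \<Longrightarrow> vcod D (tgt D \<Phi>) = htgt D (scod D \<Phi>)"
  and tgt_sid: "M \<in> Hm D \<Longrightarrow> tgt D (sid D M) = vid D (htgt D M)"
  and tgt_scomp: "\<lbrakk>\<Phi> \<in> Sq D; \<Psi> \<in> Sq D; scod D \<Phi> = sdom D \<Psi>\<rbrakk>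
      \<Longrightarrow> tgt D (scomp D \<Psi> \<Phi>) = vcomp D (tgt D \<Psi>) (tgt D \<Phi>)"
  and hunit_in: "a \<in> Ob D \<Longrightarrow> hunit D a \<in> Hm D"
  and hunitv_in: "f \<in> Vm D \<Longrightarrow> hunitv D f \<in> Sq D"
  and hunitv_dom: "f \<in> Vm D \<Longrightarrow> sdom D (hunitv D f) = hunit D (vdom D f)"
  and hunitv_cod: "f \<in> Vm D \<Longrightarrow> scod D (hunitv D f) = hunit D (vcod D f)"
  and hunitv_vid: "a \<in> Ob D \<Longrightarrow> hunitv D (vid D a) = sid D (hunit D a)"
  and hunitv_vcomp: "\<lbrakk>f \<in> Vm D; g \<in> Vm D; vcod D f = vdom D g\<rbrakk>
      \<Longrightarrow> hunitv D (vcomp D g f) = scomp D (hunitv D g) (hunitv D f)"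
  and hsrc_hunit: "a \<in> Ob D \<Longrightarrow> hsrc D (hunit D a) = a"
  and htgt_hunit: "a \<in> Ob D \<Longrightarrow> htgt D (hunit D a) = a"
  and src_hunitv: "f \<in> Vm D \<Longrightarrow> src D (hunitv D f) = f"
  and tgt_hunitv: "f \<in> Vm D \<Longrightarrow> tgt D (hunitv D f) = f"
  and hcompH_in: "\<lbrakk>M \<in> Hm D; N \<in> Hm D; hsrc D M = htgt D N\<rbrakk> \<Longrightarrow> hcompH D M N \<in> Hm D"
  and hsrc_hcompH: "\<lbrakk>M \<in> Hm D; N \<in> Hm D; hsrc D M = htgt D N\<rbrakk> \<Longrightarrow> hsrc D (hcompH D M N) = hsrc D N"
  and htgt_hcompH: "\<lbrakk>M \<in> Hm D; N \<in> Hm D; hsrc D M = htgt D N\<rbrakk> \<Longrightarrow> htgt D (hcompH D M N) = htgt D M"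
  and hcompS_in: "\<lbrakk>\<Phi> \<in> Sq D; \<Psi> \<in> Sq D; src D \<Phi> = tgt D \<Psi>\<rbrakk> \<Longrightarrow> hcompS D \<Phi> \<Psi> \<in> Sq D"
  and hcompS_dom: "\<lbrakk>\<Phi> \<in> Sq D; \<Psi> \<in> Sq D; src D \<Phi> = tgt D \<Psi>\<rbrakk>
      \<Longrightarrow> sdom D (hcompS D \<Phi> \<Psi>) = hcompH D (sdom D \<Phi>) (sdom D \<Psi>)"
  and hcompS_cod: "\<lbrakk>\<Phi> \<in> Sq D; \<Psi> \<in> Sq D; src D \<Phi> = tgt D \<Psi>\<rbrakk>
      \<Longrightarrow> scod D (hcompS D \<Phi> \<Psi>) = hcompH D (scod D \<Phi>) (scod D \<Psi>)"
  and src_hcompS: "\<lbrakk>\<Phi> \<in> Sq D; \<Psi> \<in> Sq D; src D \<Phi> = tgt D \<Psi>\<rbrakk> \<Longrightarrow> src D (hcompS D \<Phi> \<Psi>) = src D \<Psi>"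
  and tgt_hcompS: "\<lbrakk>\<Phi> \<in> Sq D; \<Psi> \<in> Sq D; src D \<Phi> = tgt D \<Psi>\<rbrakk> \<Longrightarrow> tgt D (hcompS D \<Phi> \<Psi>) = tgt D \<Phi>"
  and hcompS_sid: "\<lbrakk>M \<in> Hm D; N \<in> Hm D; hsrc D M = htgt D N\<rbrakk>
      \<Longrightarrow> hcompS D (sid D M) (sid D N) = sid D (hcompH D M N)"
  and interchange: "\<lbrakk>\<Phi> \<in> Sq D; \<Phi>' \<in> Sq D; \<Psi> \<in> Sq D; \<Psi>' \<in> Sq D;
        scod D \<Phi> = sdom D \<Phi>'; scod D \<Psi> = sdom D \<Psi>'; src D \<Phi> = tgt D \<Psi>; src D \<Phi>' = tgt D \<Psi>'\<rbrakk>
      \<Longrightarrow> hcompS D (scomp D \<Phi>' \<Phi>) (scomp D \<Psi>' \<Psi>) = scomp D (hcompS D \<Phi>' \<Psi>') (hcompS D \<Phi> \<Psi>)"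
  and lunit_in: "M \<in> Hm D \<Longrightarrow> lunit D M \<in> Sq D"
  and lunit_dom: "M \<in> Hm D \<Longrightarrow> sdom D (lunit D M) = hcompH D (hunit D (htgt D M)) M"
  and lunit_cod: "M \<in> Hm D \<Longrightarrow> scod D (lunit D M) = M"
  and lunit_glob: "M \<in> Hm D \<Longrightarrow> globular D (lunit D M)"
  and lunit_iso: "M \<in> Hm D \<Longrightarrow> sq_iso D (lunit D M)"
  and lunit_nat: "\<Phi> \<in> Sq D \<Longrightarrow>
      scomp D \<Phi> (lunit D (sdom D \<Phi>)) = scomp D (lunit D (scod D \<Phi>)) (hcompS D (hunitv D (tgt D \<Phi>)) \<Phi>)"
  and runit_in: "M \<in> Hm D \<Longrightarrow> runit D M \<in> Sq D"
  and runit_dom: "M \<in> Hm D \<Longrightarrow> sdom D (runit D M) = hcompH D M (hunit D (hsrc D M))"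
  and runit_cod: "M \<in> Hm D \<Longrightarrow> scod D (runit D M) = M"
  and runit_glob: "M \<in> Hm D \<Longrightarrow> globular D (runit D M)"
  and runit_iso: "M \<in> Hm D \<Longrightarrow> sq_iso D (runit D M)"
  and runit_nat: "\<Phi> \<in> Sq D \<Longrightarrow>
      scomp D \<Phi> (runit D (sdom D \<Phi>)) = scomp D (runit D (scod D \<Phi>)) (hcompS D \<Phi> (hunitv D (src D \<Phi>)))"
  and assoc_in: "\<lbrakk>M \<in> Hm D; N \<in> Hm D; P \<in> Hm D; hsrc D M = htgt D N; hsrc D N = htgt D P\<rbrakk>
      \<Longrightarrow> assoc D M N P \<in> Sq D"
  and assoc_dom: "\<lbrakk>M \<in> Hm D; N \<in> Hm D; P \<in> Hm D; hsrc D M = htgt D N; hsrc D N = htgt D P\<rbrakk>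
      \<Longrightarrow> sdom D (assoc D M N P) = hcompH D (hcompH D M N) P"
  and assoc_cod: "\<lbrakk>M \<in> Hm D; N \<in> Hm D; P \<in> Hm D; hsrc D M = htgt D N; hsrc D N = htgt D P\<rbrakk>
      \<Longrightarrow> scod D (assoc D M N P) = hcompH D M (hcompH D N P)"
  and assoc_glob: "\<lbrakk>M \<in> Hm D; N \<in> Hm D; P \<in> Hm D; hsrc D M = htgt D N; hsrc D N = htgt D P\<rbrakk>
      \<Longrightarrow> globular D (assoc D M N P)"
  and assoc_iso: "\<lbrakk>M \<in> Hm D; N \<in> Hm D; P \<in> Hm D; hsrc D M = htgt D N; hsrc D N = htgt D P\<rbrakk>
      \<Longrightarrow> sq_iso D (assoc D M N P)"
  and assoc_nat: "\<lbrakk>\<Phi> \<in> Sq D; \<Psi> \<in> Sq D; \<Xi> \<in> Sq D; src D \<Phi> = tgt D \<Psi>; src D \<Psi> = tgt D \<Xi>\<rbrakk>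
      \<Longrightarrow> scomp D (hcompS D \<Phi> (hcompS D \<Psi> \<Xi>)) (assoc D (sdom D \<Phi>) (sdom D \<Psi>) (sdom D \<Xi>))
        = scomp D (assoc D (scod D \<Phi>) (scod D \<Psi>) (scod D \<Xi>)) (hcompS D (hcompS D \<Phi> \<Psi>) \<Xi>)"
  and pentagon: "\<lbrakk>M \<in> Hm D; N \<in> Hm D; P \<in> Hm D; Q \<in> Hm D;
        hsrc D M = htgt D N; hsrc D N = htgt D P; hsrc D P = htgt D Q\<rbrakk>
      \<Longrightarrow> scomp D (assoc D M N (hcompH D P Q)) (assoc D (hcompH D M N) P Q)
        = scomp D (hcompS D (sid D M) (assoc D N P Q))
            (scomp D (assoc D M (hcompH D N P) Q) (hcompS D (assoc D M N P) (sid D Q)))"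
  and triangle: "\<lbrakk>M \<in> Hm D; N \<in> Hm D; hsrc D M = htgt D N\<rbrakk>
      \<Longrightarrow> scomp D (hcompS D (sid D M) (lunit D N)) (assoc D M (hunit D (hsrc D M)) N)
        = hcompS D (runit D M) (sid D N)"

definition sub_double_category ::
  "('o, 'v, 'h, 'c, 'z) dbl_scheme \<Rightarrow> 'o set \<Rightarrow> 'v set \<Rightarrow> 'h set \<Rightarrow> 'c set \<Rightarrow> bool" where
  "sub_double_category D Os Vs Hs Ss \<longleftrightarrow>
     Os \<subseteq> Ob D \<and> Vs \<subseteq> Vm D \<and> Hs \<subseteq> Hm D \<and> Ss \<subseteq> Sq D
   \<and> (\<forall>f\<in>Vs. vdom D f \<in> Os \<and> vcod D f \<in> Os)
   \<and> (\<forall>a\<in>Os. vid D a \<in> Vs)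
   \<and> (\<forall>f\<in>Vs. \<forall>g\<in>Vs. vcod D f = vdom D g \<longrightarrow> vcomp D g f \<in> Vs)
   \<and> (\<forall>\<Phi>\<in>Ss. sdom D \<Phi> \<in> Hs \<and> scod D \<Phi> \<in> Hs)
   \<and> (\<forall>M\<in>Hs. sid D M \<in> Ss)
   \<and> (\<forall>\<Phi>\<in>Ss. \<forall>\<Psi>\<in>Ss. scod D \<Phi> = sdom D \<Psi> \<longrightarrow> scomp D \<Psi> \<Phi> \<in> Ss)
   \<and> (\<forall>M\<in>Hs. hsrc D M \<in> Os \<and> htgt D M \<in> Os)
   \<and> (\<forall>\<Phi>\<in>Ss. src D \<Phi> \<in> Vs \<and> tgt D \<Phi> \<in> Vs)
   \<and> (\<forall>a\<in>Os. hunit D a \<in> Hs)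
   \<and> (\<forall>f\<in>Vs. hunitv D f \<in> Ss)
   \<and> (\<forall>M\<in>Hs. \<forall>N\<in>Hs. hsrc D M = htgt D N \<longrightarrow> hcompH D M N \<in> Hs)
   \<and> (\<forall>\<Phi>\<in>Ss. \<forall>\<Psi>\<in>Ss. src D \<Phi> = tgt D \<Psi> \<longrightarrow> hcompS D \<Phi> \<Psi> \<in> Ss)
   \<and> (\<forall>M\<in>Hs. lunit D M \<in> Ss \<and> (\<forall>\<Psi>. sq_inverse D \<Psi> (lunit D M) \<longrightarrow> \<Psi> \<in> Ss))
   \<and> (\<forall>M\<in>Hs. runit D M \<in> Ss \<and> (\<forall>\<Psi>. sq_inverse D \<Psi> (runit D M) \<longrightarrow> \<Psi> \<in> Ss))
   \<and> (\<forall>M\<in>Hs. \<forall>N\<in>Hs. \<forall>P\<in>Hs. hsrc D M = htgt D N \<longrightarrow> hsrc D N = htgt D P \<longrightarrow>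
        assoc D M N P \<in> Ss \<and> (\<forall>\<Psi>. sq_inverse D \<Psi> (assoc D M N P) \<longrightarrow> \<Psi> \<in> Ss))"

text \<open>D is globularily generated: the smallest sub-double category containing all objects,
  vertical morphisms, horizontal morphisms and globular 2-morphisms is D itself, i.e.
  every such sub-double category contains all 2-morphisms of D.\<close>
definition globularily_generated :: "('o, 'v, 'h, 'c, 'z) dbl_scheme \<Rightarrow> bool" where
  "globularily_generated D \<longleftrightarrow>
     (\<forall>Os Vs Hs Ss. sub_double_category D Os Vs Hs Ss \<and> Ob D \<subseteq> Os \<and> Vm D \<subseteq> Vs \<and> Hm D \<subseteq> Hs
        \<and> {\<Phi> \<in> Sq D. globular D \<Phi>} \<subseteq> Ss \<longrightarrow> Sq D \<subseteq> Ss)"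

end

theory Submission
  imports Defs
begin

text \<open>Vertically composing with a globular 2-morphism changes neither its source nor its
  target, and a horizontal composite takes its source from the right and its target from the
  left factor. Hence the 2-morphisms that are globular or horizontal endomorphisms are closed
  under all operations; as the constraint cells, their inverses and the horizontal identities
  i f are of this kind, they form a sub-double category containing all globular 2-morphisms,
  which in a globularily generated double category is everything.\<close>

lemma globular_cong:
  assumes "src D \<Phi> = src D \<Psi>" "tgt D \<Phi> = tgt D \<Psi>"
  shows "globular D \<Phi> \<longleftrightarrow> globular D \<Psi>"
  using assms unfolding globular_def by simp

context double_category
begin

lemma globular_sid: "M \<in> Hm D \<Longrightarrow> globular D (sid D M)"
  unfolding globular_def using src_sid tgt_sid hsrc_in htgt_in by auto

lemma src_tgt_scomp_globular_right:
  assumes "\<Phi> \<in> Sq D" "\<Psi> \<in> Sq D" "scod D \<Phi> = sdom D \<Psi>" "globular D \<Phi>"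
  shows "src D (scomp D \<Psi> \<Phi>) = src D \<Psi>" "tgt D (scomp D \<Psi> \<Phi>) = tgt D \<Psi>"
proof -
  from assms(4) obtain a b where
    "a \<in> Ob D" "src D \<Phi> = vid D a" "b \<in> Ob D" "tgt D \<Phi> = vid D b"
    unfolding globular_def by blast
  moreover have "vdom D (src D \<Psi>) = vcod D (src D \<Phi>)" "vdom D (tgt D \<Psi>) = vcod D (tgt D \<Phi>)"
    using assms(1-3) src_dom src_cod tgt_dom tgt_cod by simp_all
  ultimately show "src D (scomp D \<Psi> \<Phi>) = src D \<Psi>" "tgt D (scomp D \<Psi> \<Phi>) = tgt D \<Psi>"
    using assms(1-3) src_scomp tgt_scomp src_in tgt_in vid_cod by (metis vcomp_idr)+
qed

lemma src_tgt_scomp_globular_left: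
  assumes "\<Phi> \<in> Sq D" "\<Psi> \<in> Sq D" "scod D \<Phi> = sdom D \<Psi>" "globular D \<Psi>"
  shows "src D (scomp D \<Psi> \<Phi>) = src D \<Phi>" "tgt D (scomp D \<Psi> \<Phi>) = tgt D \<Phi>"
proof -
  from assms(4) obtain a b where
    "a \<in> Ob D" "src D \<Psi> = vid D a" "b \<in> Ob D" "tgt D \<Psi> = vid D b"
    unfolding globular_def by blast
  moreover have "vcod D (src D \<Phi>) = vdom D (src D \<Psi>)" "vcod D (tgt D \<Phi>) = vdom D (tgt D \<Psi>)"
    using assms(1-3) src_dom src_cod tgt_dom tgt_cod by simp_all
  ultimately show "src D (scomp D \<Psi> \<Phi>) = src D \<Phi>" "tgt D (scomp D \<Psi> \<Phi>) = tgt D \<Phi>"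
    using assms(1-3) src_scomp tgt_scomp src_in tgt_in vid_dom by (metis vcomp_idl)+
qed

lemma globular_sq_inverse:
  assumes "sq_inverse D \<Psi> \<Phi>" "globular D \<Phi>"
  shows "globular D \<Psi>"
proof -
  have \<Phi>: "\<Phi> \<in> Sq D" and "\<Psi> \<in> Sq D" "scod D \<Phi> = sdom D \<Psi>"
    "scomp D \<Psi> \<Phi> = sid D (sdom D \<Phi>)"
    using assms(1) unfolding sq_inverse_def by auto
  then have "src D \<Psi> = src D (sid D (sdom D \<Phi>))" "tgt D \<Psi> = tgt D (sid D (sdom D \<Phi>))"
    using src_tgt_scomp_globular_right assms(2) by metis+
  then show ?thesis
    using globular_cong globular_sid sdom_in \<Phi> by metis
qed

lemma globular_or_endo_scomp:
  assumes "\<Phi> \<in> Sq D" "\<Psi> \<in> Sq D" "scod D \<Phi> = sdom D \<Psi>"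
    and "globular D \<Phi> \<or> src D \<Phi> = tgt D \<Phi>" "globular D \<Psi> \<or> src D \<Psi> = tgt D \<Psi>"
  shows "globular D (scomp D \<Psi> \<Phi>) \<or> src D (scomp D \<Psi> \<Phi>) = tgt D (scomp D \<Psi> \<Phi>)"
proof (cases "globular D \<Phi> \<or> globular D \<Psi>")
  case True
  then show ?thesis
    using assms src_tgt_scomp_globular_left src_tgt_scomp_globular_right globular_cong by metis
next
  case False
  then show ?thesis
    using assms src_scomp tgt_scomp by auto
qed

lemma globular_or_endo_hcompS:
  assumes "\<Phi> \<in> Sq D" "\<Psi> \<in> Sq D" "src D \<Phi> = tgt D \<Psi>"
    and "globular D \<Phi> \<or> src D \<Phi> = tgt D \<Phi>" "globular D \<Psi> \<or> src D \<Psi> = tgt D \<Psi>"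
  shows "globular D (hcompS D \<Phi> \<Psi>) \<or> src D (hcompS D \<Phi> \<Psi>) = tgt D (hcompS D \<Phi> \<Psi>)"
proof -
  have src: "src D (hcompS D \<Phi> \<Psi>) = src D \<Psi>" and tgt: "tgt D (hcompS D \<Phi> \<Psi>) = tgt D \<Phi>"
    using assms(1-3) src_hcompS tgt_hcompS by auto
  consider "src D \<Phi> = tgt D \<Phi>" | "src D \<Psi> = tgt D \<Psi>" | "globular D \<Phi>" "globular D \<Psi>"
    using assms(4,5) by blast
  then show ?thesis
  proof cases
    case 1
    then show ?thesis using assms(3,5) src tgt globular_cong by metis
  next
    case 2
    then show ?thesis using assms(3,4) src tgt globular_cong by metis
  next
    case 3
    then show ?thesis using src tgt unfolding globular_def by auto
  qed
qed

lemma sub_double_category_globular_or_endo: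
  "sub_double_category D (Ob D) (Vm D) (Hm D) {\<Phi> \<in> Sq D. globular D \<Phi> \<or> src D \<Phi> = tgt D \<Phi>}"
proof -
  have inverse_closed: "\<Psi> \<in> Sq D \<and> globular D \<Psi>" if "sq_inverse D \<Psi> \<Phi>" "globular D \<Phi>" for \<Psi> \<Phi>
    using globular_sq_inverse[OF that] that(1) unfolding sq_inverse_def by blast
  show ?thesis
    unfolding sub_double_category_def
    by (intro conjI ballI allI impI)
      (use vdom_in vcod_in vid_in vcomp_in sdom_in scod_in sid_in globular_sid scomp_in
        globular_or_endo_scomp hsrc_in htgt_in src_in tgt_in hunit_in hunitv_in src_hunitv
        tgt_hunitv hcompH_in hcompS_in globular_or_endo_hcompS lunit_in lunit_glob runit_in
        runit_glob assoc_in assoc_glob inverse_closed in auto)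
qed

end

theorem proposition4p4:
  fixes D :: "('o, 'v, 'h, 'c, 'z) dbl_scheme" and \<Phi> :: 'c
  assumes "double_category D"
    and "globularily_generated D"
    and "\<Phi> \<in> Sq D"
    and "\<not> globular D \<Phi>"
  shows "src D \<Phi> = tgt D \<Phi>"
proof -
  have "Sq D \<subseteq> {\<Phi> \<in> Sq D. globular D \<Phi> \<or> src D \<Phi> = tgt D \<Phi>}"
    using assms(2) double_category.sub_double_category_globular_or_endo[OF assms(1)]
    unfolding globularily_generated_def by blast
  with assms(3,4) show ?thesis by blast
qed

end
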